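(* Let $k\geq 2$ and let $G$ be a bipartite graph of order $n\geq 11k-4$ that does not contain $k\cdot P_3$ as a subgraph. Then $e(G)\leq (k-1)(n-k+1)$. Moreover, if $k=2$, equality holds if and only if $G=T_{n,s}$ for some $s\in\{0,1,\dots,\lfloor (n-1)/2\rfloor\}$; if $k\geq 3$, equality holds if and only if $G=K_{k-1,n-k+1}$.
   Context: Graphs are finite and simple; $e(G)$ is the number of edges. $P_3$ is the path on 3 vertices and $k\cdot P_3$ is the disjoint union of $k$ copies of $P_3$. $K_{a,b}$ is the complete bipartite graph with parts of sizes $a$ and $b$. For $0\leq s\leq \lfloor (n-1)/2\rfloor$, $T_{n,s}$ is the tree of order $n$ obtained by taking $s$ paths $P_3$ and $n-2s-1$ paths $P_2$ and identifying an end vertex of each of these paths into a single common vertex (so $T_{n,0}$ is the star of order $n$). *)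

theory Defs
  imports Main
begin

definition sgraph :: "'a set \<Rightarrow> 'a set set \<Rightarrow> bool" where
  "sgraph V E \<longleftrightarrow> finite V \<and>
     (\<forall>e\<in>E. \<exists>u v. e = {u, v} \<and> u \<noteq> v \<and> u \<in> V \<and> v \<in> V)"

definition bipartite :: "'a set \<Rightarrow> 'a set set \<Rightarrow> bool" where
  "bipartite V E \<longleftrightarrow> (\<exists>A B. A \<union> B = V \<and> A \<inter> B = {} \<and>
     (\<forall>e\<in>E. \<exists>u v. e = {u, v} \<and> u \<in> A \<and> v \<in> B))"

text \<open>G contains k disjoint copies of P3 (a_i - b_i - c_i) as a subgraph.\<close>
definition contains_kP3 :: "nat \<Rightarrow> 'a set \<Rightarrow> 'a set set \<Rightarrow> bool" where
  "contains_kP3 k V E \<longleftrightarrow> (\<exists>a b c :: nat \<Rightarrow> 'a.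
     (\<forall>i<k. a i \<in> V \<and> b i \<in> V \<and> c i \<in> V \<and> {a i, b i} \<in> E \<and> {b i, c i} \<in> E) \<and>
     inj_on (\<lambda>(i, j). if j = (0::nat) then a i else if j = 1 then b i else c i)
            ({..<k} \<times> {0, 1, 2}))"

definition graph_iso :: "'a set \<Rightarrow> 'a set set \<Rightarrow> 'b set \<Rightarrow> 'b set set \<Rightarrow> bool" where
  "graph_iso V E W F \<longleftrightarrow> (\<exists>f. bij_betw f V W \<and>
     (\<forall>u\<in>V. \<forall>v\<in>V. {u, v} \<in> E \<longleftrightarrow> {f u, f v} \<in> F))"

text \<open>T_{n,s} on vertices {0..<n}: centre 0; paths 0 - i - (s+i) for 1 \<le> i \<le> s;
  pendant edges 0 - j for 2s+1 \<le> j < n.\<close>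
definition T_verts :: "nat \<Rightarrow> nat set" where
  "T_verts n = {..<n}"

definition T_edges :: "nat \<Rightarrow> nat \<Rightarrow> nat set set" where
  "T_edges n s = {{0, i} | i. 1 \<le> i \<and> i \<le> s} \<union> {{i, s + i} | i. 1 \<le> i \<and> i \<le> s}
                 \<union> {{0, j} | j. 2 * s + 1 \<le> j \<and> j < n}"

definition K_verts :: "nat \<Rightarrow> nat \<Rightarrow> nat set" where
  "K_verts a b = {..<a + b}"

definition K_edges :: "nat \<Rightarrow> nat \<Rightarrow> nat set set" where
  "K_edges a b = {{i, j} | i j. i < a \<and> a \<le> j \<and> j < a + b}"

end

theory Submission
  imports Defs
begin

text \<open>
  Induction on \<open>k\<close>. For \<open>k \<ge> 3\<close> fix a bipartition \<open>(A, B)\<close>. If a side has at most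
  \<open>k - 1\<close> vertices, then \<open>e(G) \<le> |A| |B| \<le> (k - 1)(n - k + 1)\<close>, with equality only for
  \<open>K\<^bsub>k-1,n-k+1\<^esub>\<close>. Otherwise all degrees are at most \<open>n - k\<close>. A vertex \<open>v\<close> of degree
  at least \<open>3k - 1\<close> can be deleted: a \<open>(k - 1)\<cdot>P\<^sub>3\<close> in \<open>G - v\<close> occupies at most \<open>3k - 3\<close> vertices,
  so it misses two neighbours of \<open>v\<close> and extends to a \<open>k\<cdot>P\<^sub>3\<close>; induction then gives
  \<open>e(G) \<le> (n - k) + (k - 2)(n - k + 1)\<close>. If all degrees are at most \<open>3k - 2\<close>, take a maximum
  packing of \<open>p < k\<close> paths; outside its at most \<open>3p\<close> vertices the graph is a matching, and
  counting gives \<open>e(G) < (k - 1)(n - k + 1)\<close> as soon as \<open>n \<ge> 11k - 4\<close>.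

  For \<open>k = 2\<close>, a vertex \<open>v\<close> of degree at least 5 leaves a matching in \<open>G - v\<close>; since there are
  no triangles, each of its edges meets a non-neighbour of \<open>v\<close>, whence \<open>e(G) \<le> n - 1\<close>, and
  equality forces every non-neighbour to be matched to a neighbour, i.e. \<open>G = T\<^bsub>n,s\<^esub>\<close>. If all
  degrees are at most 4, counting the edges around a single \<open>P\<^sub>3\<close> gives \<open>e(G) < n - 1\<close>.
\<close>

definition neighbours :: "'a set set \<Rightarrow> 'a \<Rightarrow> 'a set" where
  "neighbours E v = {u. {v, u} \<in> E}"

definition induced_edges :: "'a set set \<Rightarrow> 'a set \<Rightarrow> 'a set set" where
  "induced_edges E U = {e \<in> E. e \<subseteq> U}"

definition bipartition :: "'a set \<Rightarrow> 'a set set \<Rightarrow> 'a set \<Rightarrow> 'a set \<Rightarrow> bool" where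
  "bipartition V E A B \<longleftrightarrow> A \<union> B = V \<and> A \<inter> B = {} \<and>
     (\<forall>e\<in>E. \<exists>u v. e = {u, v} \<and> u \<in> A \<and> v \<in> B)"

lemma bipartite_iff_bipartition: "bipartite V E \<longleftrightarrow> (\<exists>A B. bipartition V E A B)"
  unfolding bipartite_def bipartition_def by blast

lemma bipartition_swap: "bipartition V E A B \<Longrightarrow> bipartition V E B A"
  unfolding bipartition_def by (metis Int_commute Un_commute insert_commute)

lemma sgraph_finite: "sgraph V E \<Longrightarrow> finite V"
  unfolding sgraph_def by blast

lemma sgraph_edgeE:
  assumes "sgraph V E" "e \<in> E"
  obtains u w where "e = {u, w}" "u \<noteq> w" "u \<in> V" "w \<in> V"
  using assms unfolding sgraph_def by blast

lemma sgraph_edge_subset: "sgraph V E \<Longrightarrow> e \<in> E \<Longrightarrow> e \<subseteq> V"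
  by (auto elim: sgraph_edgeE)

lemma sgraph_finite_edges: "sgraph V E \<Longrightarrow> finite E"
  by (meson Pow_iff finite_Pow_iff finite_subset sgraph_edge_subset sgraph_finite subsetI)

lemma sgraph_no_loop: "sgraph V E \<Longrightarrow> {u, w} \<in> E \<Longrightarrow> u \<noteq> w"
  by (erule sgraph_edgeE) (auto simp: doubleton_eq_iff)

lemma sgraph_edge_vertices: "sgraph V E \<Longrightarrow> {u, w} \<in> E \<Longrightarrow> u \<in> V \<and> w \<in> V"
  using sgraph_edge_subset by blast

lemma sgraph_induced: "sgraph V E \<Longrightarrow> U \<subseteq> V \<Longrightarrow> sgraph U (induced_edges E U)"
  unfolding sgraph_def induced_edges_def by (auto intro: finite_subset) (metis insert_subset)

lemma bipartition_induced:
  "bipartition V E A B \<Longrightarrow> U \<subseteq> V \<Longrightarrow> bipartition U (induced_edges E U) (A \<inter> U) (B \<inter> U)"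
  unfolding bipartition_def induced_edges_def by fastforce

lemma bipartite_induced: "bipartite V E \<Longrightarrow> U \<subseteq> V \<Longrightarrow> bipartite U (induced_edges E U)"
  using bipartition_induced bipartite_iff_bipartition by metis

lemma neighbours_subset: "sgraph V E \<Longrightarrow> neighbours E v \<subseteq> V"
  unfolding neighbours_def by (auto dest: sgraph_edge_vertices)

lemma finite_neighbours: assumes "sgraph V E" shows "finite (neighbours E v)"
  using neighbours_subset[OF assms] sgraph_finite[OF assms] by (rule finite_subset)

lemma not_in_neighbours: "sgraph V E \<Longrightarrow> v \<notin> neighbours E v"
  using sgraph_no_loop[of V E v v] by (auto simp: neighbours_def)

lemma bipartition_edge_sides:
  assumes "bipartition V E A B" "{p, q} \<in> E"
  shows "(p \<in> A \<and> q \<in> B) \<or> (p \<in> B \<and> q \<in> A)"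
proof -
  obtain u v where "{p, q} = {u, v}" "u \<in> A" "v \<in> B"
    using assms unfolding bipartition_def by blast
  thus ?thesis by (auto simp: doubleton_eq_iff)
qed

lemma bipartite_no_triangle:
  assumes "bipartite V E" "{x, y} \<in> E" "{y, z} \<in> E" "{x, z} \<in> E"
  shows False
proof -
  obtain A B where AB: "bipartition V E A B"
    using assms(1) bipartite_iff_bipartition by blast
  have "A \<inter> B = {}" using AB unfolding bipartition_def by blast
  with bipartition_edge_sides[OF AB assms(2)] bipartition_edge_sides[OF AB assms(3)]
    bipartition_edge_sides[OF AB assms(4)] show False by blast
qed

lemma bipartition_neighbours:
  assumes "bipartition V E A B" "v \<in> A"
  shows "neighbours E v \<subseteq> B"
proof
  fix u assume "u \<in> neighbours E v"
  hence "{v, u} \<in> E" unfolding neighbours_def by simp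
  with bipartition_edge_sides[OF assms(1)] assms show "u \<in> B"
    unfolding bipartition_def by blast
qed

lemma incident_edges_eq:
  assumes "sgraph V E"
  shows "{e \<in> E. v \<in> e} = (\<lambda>u. {v, u}) ` neighbours E v"
proof (intro set_eqI iffI)
  fix e assume e: "e \<in> {e \<in> E. v \<in> e}"
  then obtain u w where "e = {u, w}" using sgraph_edgeE[OF assms] by blast
  with e obtain x where "e = {v, x}" by (auto simp: insert_commute)
  with e show "e \<in> (\<lambda>u. {v, u}) ` neighbours E v" unfolding neighbours_def by blast
qed (auto simp: neighbours_def)

lemma card_star_edges: "card ((\<lambda>u. {v, u}) ` X) = card X"
  by (rule card_image) (auto simp: inj_on_def doubleton_eq_iff)

lemma edges_split_vertex:
  assumes "sgraph V E" "v \<in> V"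
  shows "E = (\<lambda>u. {v, u}) ` neighbours E v \<union> induced_edges E (V - {v})"
  using sgraph_edge_subset[OF assms(1)] incident_edges_eq[OF assms(1), symmetric]
  unfolding induced_edges_def by blast

lemma card_edges_split_vertex:
  assumes "sgraph V E" "v \<in> V"
  shows "card E = card (neighbours E v) + card (induced_edges E (V - {v}))"
proof -
  have "(\<lambda>u. {v, u}) ` neighbours E v \<inter> induced_edges E (V - {v}) = {}"
    unfolding induced_edges_def by blast
  moreover have "finite E" by (rule sgraph_finite_edges[OF assms(1)])
  ultimately show ?thesis
    using edges_split_vertex[OF assms] card_Un_disjoint card_star_edges by (metis finite_Un)
qed

lemma card_edges_le_induced_plus_degrees:
  assumes s: "sgraph V E" and P: "P \<subseteq> V"
  shows "card E \<le> card (induced_edges E (V - P)) + (\<Sum>u\<in>P. card (neighbours E u))"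
proof -
  define S where "S = (\<Union>u\<in>P. (\<lambda>w. {u, w}) ` neighbours E u)"
  have fP: "finite P" using P sgraph_finite[OF s] finite_subset by blast
  have fS: "finite S" unfolding S_def using fP finite_neighbours[OF s] by blast
  have fI: "finite (induced_edges E (V - P))"
    unfolding induced_edges_def using sgraph_finite_edges[OF s] by simp
  have "E \<subseteq> induced_edges E (V - P) \<union> S"
  proof
    fix e assume e: "e \<in> E"
    show "e \<in> induced_edges E (V - P) \<union> S"
    proof (cases "e \<subseteq> V - P")
      case True thus ?thesis using e unfolding induced_edges_def by blast
    next
      case False
      then obtain u where "u \<in> P" "u \<in> e" using sgraph_edge_subset[OF s e] by blast
      thus ?thesis using e incident_edges_eq[OF s, of u] unfolding S_def by blast
    qed
  qed
  hence "card E \<le> card (induced_edges E (V - P) \<union> S)"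
    by (rule card_mono[OF finite_UnI[OF fI fS]])
  also have "\<dots> \<le> card (induced_edges E (V - P)) + card S" by (rule card_Un_le)
  also have "card S \<le> (\<Sum>u\<in>P. card (neighbours E u))"
    unfolding S_def using card_UN_le[OF fP, of "\<lambda>u. (\<lambda>w. {u, w}) ` neighbours E u"]
    by (simp only: card_star_edges)
  finally show ?thesis by simp
qed

lemma contains_kP3_mono:
  assumes "contains_kP3 p W F" "W \<subseteq> V" "F \<subseteq> E"
  shows "contains_kP3 p V E"
  using assms unfolding contains_kP3_def by (meson subsetD)

lemma contains_kP3_0: "contains_kP3 0 V E"
  unfolding contains_kP3_def by simp

lemma contains_kP3_Suc:
  assumes "contains_kP3 p W E" "W \<subseteq> V" "x \<in> V" "y \<in> V" "z \<in> V"
    and "x \<notin> W" "y \<notin> W" "z \<notin> W" "distinct [x, y, z]" "{x, y} \<in> E" "{y, z} \<in> E"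
  shows "contains_kP3 (Suc p) V E"
proof -
  obtain a b c where abc: "\<forall>i<p. a i \<in> W \<and> b i \<in> W \<and> c i \<in> W \<and> {a i, b i} \<in> E \<and> {b i, c i} \<in> E"
    and inj: "inj_on (\<lambda>(i, j). if j = (0::nat) then a i else if j = 1 then b i else c i)
                ({..<p} \<times> {0, 1, 2})"
    using assms(1) unfolding contains_kP3_def by blast
  define a' b' c' where "a' = a(p := x)" and "b' = b(p := y)" and "c' = c(p := z)"
  define f where "f = (\<lambda>(i, j). if j = (0::nat) then a' i else if j = 1 then b' i else c' i)"
  have old: "inj_on f ({..<p} \<times> {0, 1, 2})"
    using inj by (rule inj_on_cong[THEN iffD1, rotated]) (auto simp: f_def a'_def b'_def c'_def)
  have new_image: "f ` ({p} \<times> {0, 1, 2}) = {x, y, z}"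
    by (auto simp: f_def a'_def b'_def c'_def)
  have new: "inj_on f ({p} \<times> {0, 1, 2})"
    using assms(9) by (simp add: f_def a'_def b'_def c'_def inj_on_def) blast
  have "f ` ({..<p} \<times> {0, 1, 2}) \<subseteq> W"
    using abc by (force simp: f_def a'_def b'_def c'_def)
  hence "f ` ({..<p} \<times> {0, 1, 2}) \<inter> f ` ({p} \<times> {0, 1, 2}) = {}"
    unfolding new_image using assms(6-8) by auto
  hence "inj_on f ({..<p} \<times> {0, 1, 2} \<union> {p} \<times> {0, 1, 2})"
    using old new by (simp add: inj_on_Un)
  moreover have "{..<p} \<times> {0, 1, 2} \<union> {p} \<times> {0, 1, 2} = {..<Suc p} \<times> {0::nat, 1, 2}"
    by auto
  ultimately have "inj_on f ({..<Suc p} \<times> {0::nat, 1, 2})"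
    by (simp only:)
  moreover have "\<forall>i<Suc p. a' i \<in> V \<and> b' i \<in> V \<and> c' i \<in> V \<and> {a' i, b' i} \<in> E \<and> {b' i, c' i} \<in> E"
    using abc assms(2-5,10,11) by (auto simp: a'_def b'_def c'_def less_Suc_eq)
  ultimately show ?thesis
    unfolding contains_kP3_def f_def by blast
qed

lemma contains_kP3_1_iff:
  "contains_kP3 1 V E \<longleftrightarrow>
     (\<exists>x y z. x \<in> V \<and> y \<in> V \<and> z \<in> V \<and> distinct [x, y, z] \<and> {x, y} \<in> E \<and> {y, z} \<in> E)"
proof
  assume "contains_kP3 1 V E"
  then obtain a b c where abc: "\<forall>i<(1::nat). a i \<in> V \<and> b i \<in> V \<and> c i \<in> V \<and> {a i, b i} \<in> E \<and> {b i, c i} \<in> E"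
    and inj: "inj_on (\<lambda>(i, j). if j = (0::nat) then a i else if j = 1 then b i else c i)
                ({..<1} \<times> {0, 1, 2})"
    unfolding contains_kP3_def by blast
  have "a 0 \<noteq> b 0" using inj_onD[OF inj, of "(0, 0)" "(0, 1)"] by auto
  moreover have "b 0 \<noteq> c 0" using inj_onD[OF inj, of "(0, 1)" "(0, 2)"] by auto
  moreover have "a 0 \<noteq> c 0" using inj_onD[OF inj, of "(0, 0)" "(0, 2)"] by auto
  moreover have "a 0 \<in> V \<and> b 0 \<in> V \<and> c 0 \<in> V \<and> {a 0, b 0} \<in> E \<and> {b 0, c 0} \<in> E"
    using abc by simp
  ultimately show "\<exists>x y z. x \<in> V \<and> y \<in> V \<and> z \<in> V \<and> distinct [x, y, z] \<and> {x, y} \<in> E \<and> {y, z} \<in> E"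
    by (intro exI[of _ "a 0"] exI[of _ "b 0"] exI[of _ "c 0"]) simp
next
  assume "\<exists>x y z. x \<in> V \<and> y \<in> V \<and> z \<in> V \<and> distinct [x, y, z] \<and> {x, y} \<in> E \<and> {y, z} \<in> E"
  then obtain x y z where xyz: "x \<in> V" "y \<in> V" "z \<in> V" "distinct [x, y, z]" "{x, y} \<in> E" "{y, z} \<in> E"
    by blast
  have "contains_kP3 (Suc 0) V E"
    by (rule contains_kP3_Suc[OF contains_kP3_0 empty_subsetI, where x = x and y = y and z = z]) (use xyz in simp_all)
  thus "contains_kP3 1 V E" by simp
qed

lemma contains_kP3_on_small_set:
  assumes "contains_kP3 p V E"
  obtains P where "P \<subseteq> V" "finite P" "card P \<le> 3 * p" "contains_kP3 p P E"
proof -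
  obtain a b c where abc: "\<forall>i<p. a i \<in> V \<and> b i \<in> V \<and> c i \<in> V \<and> {a i, b i} \<in> E \<and> {b i, c i} \<in> E"
    and inj: "inj_on (\<lambda>(i, j). if j = (0::nat) then a i else if j = 1 then b i else c i)
                ({..<p} \<times> {0, 1, 2})"
    using assms unfolding contains_kP3_def by blast
  define f where "f = (\<lambda>(i, j). if j = (0::nat) then a i else if j = 1 then b i else c i)"
  define P where "P = f ` ({..<p} \<times> {0, 1, 2})"
  have "card P \<le> card ({..<p} \<times> {0::nat, 1, 2})"
    unfolding P_def by (rule card_image_le) simp
  also have "\<dots> = 3 * p" by (simp add: card_cartesian_product)
  finally have "card P \<le> 3 * p" .
  moreover have "P \<subseteq> V"
  proof (unfold P_def, rule image_subsetI)
    fix ij assume "ij \<in> {..<p} \<times> {0::nat, 1, 2}"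
    then obtain i j where "ij = (i, j)" "i < p" by blast
    moreover have "f (i, j) \<in> {a i, b i, c i}" by (simp add: f_def)
    ultimately show "f ij \<in> V" using abc by auto
  qed
  moreover have "a i \<in> P \<and> b i \<in> P \<and> c i \<in> P" if "i < p" for i
  proof -
    have "f (i, j) \<in> P" if "j \<in> {0, 1, 2}" for j
      unfolding P_def using \<open>i < p\<close> that by (intro imageI) simp
    thus ?thesis unfolding f_def by fastforce
  qed
  with abc have "\<forall>i<p. a i \<in> P \<and> b i \<in> P \<and> c i \<in> P \<and> {a i, b i} \<in> E \<and> {b i, c i} \<in> E"
    by blast
  with inj have "contains_kP3 p P E" unfolding contains_kP3_def by blast
  moreover have "finite P" unfolding P_def by simp
  ultimately show thesis using that by blast
qed

lemma P3_free_outside_packing: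
  assumes "contains_kP3 p P E" "P \<subseteq> V" "\<not> contains_kP3 (Suc p) V E"
  shows "\<not> contains_kP3 1 (V - P) (induced_edges E (V - P))"
proof
  assume "contains_kP3 1 (V - P) (induced_edges E (V - P))"
  then obtain x y z where xyz: "x \<in> V - P" "y \<in> V - P" "z \<in> V - P" "distinct [x, y, z]"
      "{x, y} \<in> E" "{y, z} \<in> E"
    unfolding contains_kP3_1_iff induced_edges_def by blast
  have "contains_kP3 (Suc p) V E"
    by (rule contains_kP3_Suc[OF assms(1,2), where x = x and y = y and z = z]) (use xyz in auto)
  with assms(3) show False by contradiction
qed

lemma kP3_free_remove_high_degree:
  assumes s: "sgraph V E" and free: "\<not> contains_kP3 k V E" and "k \<ge> 1"
    and v: "v \<in> V" and deg: "card (neighbours E v) \<ge> 3 * k - 1"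
  shows "\<not> contains_kP3 (k - 1) (V - {v}) (induced_edges E (V - {v}))"
proof
  assume "contains_kP3 (k - 1) (V - {v}) (induced_edges E (V - {v}))"
  then obtain P where P: "P \<subseteq> V - {v}" "finite P" "card P \<le> 3 * (k - 1)"
      "contains_kP3 (k - 1) P (induced_edges E (V - {v}))"
    by (rule contains_kP3_on_small_set)
  have packing: "contains_kP3 (k - 1) P E"
    using contains_kP3_mono[OF P(4)] unfolding induced_edges_def by blast
  have "card (neighbours E v) - card P \<le> card (neighbours E v - P)"
    by (rule diff_card_le_card_Diff[OF P(2)])
  hence "2 \<le> card (neighbours E v - P)" using deg P(3) \<open>k \<ge> 1\<close> by linarith
  then obtain x y where xy: "x \<in> neighbours E v - P" "y \<in> neighbours E v - P" "x \<noteq> y"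
    by (auto simp: numeral_2_eq_2 card_le_Suc_iff)
  have "contains_kP3 (Suc (k - 1)) V E"
  proof (rule contains_kP3_Suc[OF packing, where x = x and y = v and z = y])
    show "{x, v} \<in> E" "{v, y} \<in> E"
      using xy unfolding neighbours_def by (simp_all add: insert_commute)
  qed (use xy P(1) v neighbours_subset[OF s] not_in_neighbours[OF s, of v] in auto)
  with free \<open>k \<ge> 1\<close> show False by simp
qed

lemma P3_free_edges_disjoint:
  assumes "sgraph V E" "\<not> contains_kP3 1 V E" "e \<in> E" "e' \<in> E" "w \<in> e" "w \<in> e'"
  shows "e = e'"
proof (rule ccontr)
  assume "e \<noteq> e'"
  obtain x where x: "e = {w, x}" "x \<in> V" "w \<in> V" "x \<noteq> w"
    using sgraph_edgeE[OF assms(1,3)] assms(5) by (metis insert_commute insertE singletonD)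
  obtain y where y: "e' = {w, y}" "y \<in> V" "y \<noteq> w"
    using sgraph_edgeE[OF assms(1,4)] assms(6) by (metis insert_commute insertE singletonD)
  have "x \<noteq> y" using \<open>e \<noteq> e'\<close> x(1) y(1) by blast
  hence "contains_kP3 1 V E"
    unfolding contains_kP3_1_iff using x y assms(3,4)
    by (intro exI[of _ x] exI[of _ w] exI[of _ y]) (auto simp: insert_commute)
  with assms(2) show False by contradiction
qed

lemma card_Union_P3_free:
  assumes "sgraph V E" "\<not> contains_kP3 1 V E"
  shows "card (\<Union>E) = 2 * card E"
proof -
  have "card (\<Union>E) = (\<Sum>e\<in>E. card e)"
  proof (rule card_Union_disjoint)
    show "pairwise disjnt E"
      using P3_free_edges_disjoint[OF assms] unfolding pairwise_def disjnt_def by blast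
  qed (auto elim: sgraph_edgeE[OF assms(1)])
  also have "\<dots> = (\<Sum>e\<in>E. 2)"
    by (rule sum.cong) (auto elim: sgraph_edgeE[OF assms(1)])
  finally show ?thesis by simp
qed

lemma card_edges_P3_free:
  assumes "sgraph V E" "\<not> contains_kP3 1 V E"
  shows "2 * card E \<le> card V"
  using card_Union_P3_free[OF assms] card_mono[OF sgraph_finite[OF assms(1)]]
    sgraph_edge_subset[OF assms(1)] by (metis Union_least)

lemma P3_free_edge_representative:
  assumes "sgraph U F" "\<not> contains_kP3 1 U F" "\<And>e. e \<in> F \<Longrightarrow> e \<inter> C \<noteq> {}"
  obtains \<phi> where "inj_on \<phi> F" "\<forall>e\<in>F. \<phi> e \<in> e \<inter> C"
proof -
  define \<phi> where "\<phi> e = (SOME x. x \<in> e \<inter> C)" for e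
  have \<phi>: "\<phi> e \<in> e \<inter> C" if "e \<in> F" for e
    unfolding \<phi>_def using assms(3)[OF that] by (metis ex_in_conv someI_ex)
  have "inj_on \<phi> F"
    by (rule inj_onI) (metis IntD1 \<phi> P3_free_edges_disjoint[OF assms(1,2)])
  thus thesis using \<phi> by (intro that) auto
qed

lemma card_P3_free_edges_le_cover:
  assumes s: "sgraph U F" and free: "\<not> contains_kP3 1 U F" and C: "C \<subseteq> U"
    and meet: "\<And>e. e \<in> F \<Longrightarrow> e \<inter> C \<noteq> {}"
  shows "card F \<le> card C"
proof -
  obtain \<phi> where inj: "inj_on \<phi> F" and \<phi>: "\<forall>e\<in>F. \<phi> e \<in> e \<inter> C"
    by (rule P3_free_edge_representative[OF s free meet])
  have "\<phi> ` F \<subseteq> C" using \<phi> by blast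
  moreover have "finite C" using C sgraph_finite[OF s] finite_subset by blast
  ultimately show ?thesis by (rule card_inj_on_le[OF inj])
qed

lemma P3_free_edges_eq_cover:
  assumes s: "sgraph U F" and free: "\<not> contains_kP3 1 U F" and C: "C \<subseteq> U"
    and meet: "\<And>e. e \<in> F \<Longrightarrow> e \<inter> C \<noteq> {}" and eq: "card F = card C"
  shows "\<exists>q. inj_on q C \<and> q ` C \<subseteq> U - C \<and> F = (\<lambda>x. {q x, x}) ` C"
proof -
  note disj = P3_free_edges_disjoint[OF s free]
  obtain \<phi> where inj: "inj_on \<phi> F" and \<phi>_in: "\<forall>e\<in>F. \<phi> e \<in> e \<inter> C"
    by (rule P3_free_edge_representative[OF s free meet])
  have \<phi>: "\<phi> e \<in> e \<inter> C" if "e \<in> F" for e using \<phi>_in that by blast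
  have "\<phi> ` F \<subseteq> C" using \<phi> by blast
  hence "\<phi> ` F = C"
    using card_subset_eq[OF finite_subset[OF C sgraph_finite[OF s]]] card_image[OF inj] eq by simp
  define \<epsilon> where "\<epsilon> = inv_into F \<phi>"
  have \<epsilon>: "\<epsilon> x \<in> F" "\<phi> (\<epsilon> x) = x" if "x \<in> C" for x
    using that \<open>\<phi> ` F = C\<close> unfolding \<epsilon>_def by (auto intro: inv_into_into f_inv_into_f)
  hence \<epsilon>_mem: "x \<in> \<epsilon> x" if "x \<in> C" for x using \<phi> that by (metis IntD1)
  define q where "q x = (SOME u. \<epsilon> x = {u, x})" for x
  have q: "\<epsilon> x = {q x, x}" if x: "x \<in> C" for x
  proof -
    obtain u w where "\<epsilon> x = {u, w}" using sgraph_edgeE[OF s \<epsilon>(1)[OF x]] by metis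
    with \<epsilon>_mem[OF x] have "\<exists>u. \<epsilon> x = {u, x}" by (auto simp: insert_commute)
    thus ?thesis unfolding q_def by (rule someI_ex)
  qed
  have q_notin: "q x \<notin> C" if "x \<in> C" for x
  proof
    assume "q x \<in> C"
    have "\<epsilon> (q x) = \<epsilon> x" using disj[OF \<epsilon>(1)[OF \<open>q x \<in> C\<close>] \<epsilon>(1)[OF that]]
        \<epsilon>_mem[OF \<open>q x \<in> C\<close>] q[OF that] by simp
    hence "q x = x" using \<epsilon>(2) that \<open>q x \<in> C\<close> by metis
    thus False using sgraph_no_loop[OF s] \<epsilon>(1)[OF that] q[OF that] by metis
  qed
  have "inj_on q C"
  proof (rule inj_onI)
    fix x1 x2 assume x12: "x1 \<in> C" "x2 \<in> C" "q x1 = q x2"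
    hence "\<epsilon> x1 = \<epsilon> x2" using disj[OF \<epsilon>(1)[OF x12(1)] \<epsilon>(1)[OF x12(2)], of "q x1"] q by simp
    thus "x1 = x2" using \<epsilon>(2) x12(1,2) by metis
  qed
  moreover have "q ` C \<subseteq> U - C"
    using q_notin q \<epsilon>(1) sgraph_edge_subset[OF s] by blast
  moreover have "F = (\<lambda>x. {q x, x}) ` C"
  proof (intro set_eqI iffI)
    fix e assume e: "e \<in> F"
    hence x: "\<phi> e \<in> C" "\<phi> e \<in> e" using \<phi> by auto
    have "e = \<epsilon> (\<phi> e)" by (rule disj[OF e \<epsilon>(1)[OF x(1)] x(2) \<epsilon>_mem[OF x(1)]])
    thus "e \<in> (\<lambda>x. {q x, x}) ` C" using q x(1) by blast
  qed (use q \<epsilon>(1) in auto)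
  ultimately show ?thesis by blast
qed

lemma graph_iso_of_bij_betw:
  assumes g: "bij_betw g W V" and F: "\<And>e. e \<in> F \<Longrightarrow> e \<subseteq> W" and E: "E = (\<lambda>e. g ` e) ` F"
  shows "graph_iso V E W F"
proof -
  define f where "f = inv_into W g"
  have f: "bij_betw f V W" unfolding f_def by (rule bij_betw_inv_into[OF g])
  have "{u, v} \<in> E \<longleftrightarrow> {f u, f v} \<in> F" if "u \<in> V" "v \<in> V" for u v
  proof
    assume "{f u, f v} \<in> F"
    moreover have "g ` {f u, f v} = {u, v}"
      using that g unfolding f_def by (simp add: bij_betw_inv_into_right)
    ultimately show "{u, v} \<in> E" unfolding E by (metis image_eqI)
  next
    assume "{u, v} \<in> E"
    then obtain e where "e \<in> F" "{u, v} = g ` e" unfolding E by blast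
    moreover have "f ` (g ` e) = e"
      unfolding f_def by (rule inv_into_image_cancel[OF bij_betw_imp_inj_on[OF g] F[OF \<open>e \<in> F\<close>]])
    ultimately show "{f u, f v} \<in> F" by (metis image_empty image_insert)
  qed
  with f show ?thesis unfolding graph_iso_def by blast
qed

lemma card_edges_graph_iso:
  assumes iso: "graph_iso V E W F" and "sgraph V E" "sgraph W F"
  shows "card E = card F"
proof -
  obtain f where f: "bij_betw f V W" and adj: "\<forall>u\<in>V. \<forall>v\<in>V. {u, v} \<in> E \<longleftrightarrow> {f u, f v} \<in> F"
    using iso unfolding graph_iso_def by blast
  have "(\<lambda>e. f ` e) ` E = F"
  proof (intro set_eqI iffI)
    fix e' assume "e' \<in> (\<lambda>e. f ` e) ` E"
    then obtain e where e: "e \<in> E" "e' = f ` e" by blast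
    obtain u v where "e = {u, v}" "u \<noteq> v" "u \<in> V" "v \<in> V" by (rule sgraph_edgeE[OF assms(2) e(1)])
    with e adj show "e' \<in> F" by simp
  next
    fix e' assume "e' \<in> F"
    then obtain x y where xy: "e' = {x, y}" "x \<noteq> y" "x \<in> W" "y \<in> W"
      by (rule sgraph_edgeE[OF assms(3)])
    then obtain u v where uv: "u \<in> V" "v \<in> V" "x = f u" "y = f v"
      using bij_betw_imp_surj_on[OF f] by blast
    with adj \<open>e' \<in> F\<close> xy have "{u, v} \<in> E" by simp
    moreover have "e' = f ` {u, v}" using xy uv by simp
    ultimately show "e' \<in> (\<lambda>e. f ` e) ` E" by blast
  qed
  moreover have "inj_on (\<lambda>e. f ` e) E"
    by (rule inj_on_subset[OF inj_on_image_Pow[OF bij_betw_imp_inj_on[OF f]]])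
      (use sgraph_edge_subset[OF assms(2)] in blast)
  ultimately show ?thesis using card_image by fastforce
qed

lemma card_complete_bipartite_edges:
  assumes "A \<inter> B = {}"
  shows "card ((\<lambda>(u, v). {u, v}) ` (A \<times> B)) = card A * card B"
proof -
  have "inj_on (\<lambda>(u, v). {u, v}) (A \<times> B)"
    using assms by (auto simp: inj_on_def doubleton_eq_iff)
  thus ?thesis by (simp add: card_image card_cartesian_product)
qed

lemma K_edges_eq: "K_edges a b = (\<lambda>(i, j). {i, j}) ` ({..<a} \<times> {a..<a + b})"
  unfolding K_edges_def by auto blast

lemma card_K_edges: "card (K_edges a b) = a * b"
  unfolding K_edges_eq by (subst card_complete_bipartite_edges) auto

lemma sgraph_K: "sgraph (K_verts a b) (K_edges a b)"
  unfolding sgraph_def K_verts_def K_edges_def by fastforce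

lemma T_edges_eq:
  "T_edges n s = (\<lambda>i. {0, i}) ` {1..s} \<union> (\<lambda>i. {i, s + i}) ` {1..s} \<union> (\<lambda>j. {0, j}) ` {2 * s + 1..<n}"
  unfolding T_edges_def by auto

lemma sgraph_T: "2 * s + 1 \<le> n \<Longrightarrow> sgraph (T_verts n) (T_edges n s)"
  unfolding sgraph_def T_verts_def T_edges_eq by (auto, (intro exI conjI, rule refl, simp_all)+)

lemma card_T_edges:
  assumes "2 * s + 1 \<le> n"
  shows "card (T_edges n s) = n - 1"
proof -
  have inj0: "inj_on (\<lambda>i. {0::nat, i}) X" for X by (rule inj_onI) (auto simp: doubleton_eq_iff)
  have "card ((\<lambda>i. {i, s + i}) ` {1..s}) = s"
    by (subst card_image) (auto simp: inj_on_def doubleton_eq_iff)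
  moreover have "card ((\<lambda>i. {0::nat, i}) ` {1..s}) = s" "card ((\<lambda>j. {0::nat, j}) ` {2 * s + 1..<n}) = n - (2 * s + 1)"
    using inj0 by (simp_all add: card_image)
  moreover have "(\<lambda>i. {0::nat, i}) ` {1..s} \<inter> (\<lambda>i. {i, s + i}) ` {1..s} = {}"
    "((\<lambda>i. {0::nat, i}) ` {1..s} \<union> (\<lambda>i. {i, s + i}) ` {1..s}) \<inter> (\<lambda>j. {0, j}) ` {2 * s + 1..<n} = {}"
    by (auto simp: doubleton_eq_iff)
  ultimately show ?thesis
    unfolding T_edges_eq using assms by (simp add: card_Un_disjoint)
qed

lemma image_pair_edges:
  "(\<lambda>e. g ` e) ` ((\<lambda>(i, j). {i, j}) ` (I \<times> J)) = (\<lambda>(u, v). {u, v}) ` (g ` I \<times> g ` J)"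
proof -
  have "(\<lambda>e. g ` e) \<circ> (\<lambda>(i, j). {i, j}) = (\<lambda>(u, v). {u, v}) \<circ> map_prod g g" by auto
  hence "(\<lambda>e. g ` e) ` ((\<lambda>(i, j). {i, j}) ` (I \<times> J)) = (\<lambda>(u, v). {u, v}) ` (map_prod g g ` (I \<times> J))"
    by (simp only: image_comp)
  thus ?thesis by (simp only: map_prod_surj_on[OF refl refl])
qed

lemma graph_iso_complete_bipartite:
  assumes "finite A" "finite B" "A \<inter> B = {}"
  shows "graph_iso (A \<union> B) ((\<lambda>(u, v). {u, v}) ` (A \<times> B))
           (K_verts (card A) (card B)) (K_edges (card A) (card B))"
proof -
  define a b where "a = card A" and "b = card B"
  obtain hA where hA: "bij_betw hA {..<a} A"
    using finite_same_card_bij[of "{..<a}" A] assms(1) a_def by auto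
  obtain hB where hB: "bij_betw hB {a..<a + b} B"
    using finite_same_card_bij[of "{a..<a + b}" B] assms(2) b_def by auto
  define g where "g i = (if i \<in> {..<a} then hA i else hB i)" for i
  have "bij_betw g ({..<a} \<union> {a..<a + b}) (A \<union> B)"
    unfolding g_def by (rule bij_betw_disjoint_Un[OF hA hB]) (use assms(3) in auto)
  moreover have "{..<a} \<union> {a..<a + b} = K_verts a b" unfolding K_verts_def by auto
  ultimately have g: "bij_betw g (K_verts a b) (A \<union> B)" by simp
  have "g ` {..<a} = A" using hA unfolding g_def bij_betw_def by simp
  moreover have "g ` {a..<a + b} = B" using hB unfolding g_def bij_betw_def by auto
  ultimately have "(\<lambda>(u, v). {u, v}) ` (A \<times> B) = (\<lambda>e. g ` e) ` K_edges a b"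
    unfolding K_edges_eq image_pair_edges by simp
  from graph_iso_of_bij_betw[OF g sgraph_edge_subset[OF sgraph_K] this]
  show ?thesis unfolding a_def b_def .
qed

lemma image_T_edges:
  "(\<lambda>e. g ` e) ` T_edges n s =
     (\<lambda>u. {g 0, u}) ` (g ` {1..s} \<union> g ` {2 * s + 1..<n}) \<union> (\<lambda>i. {g i, g (s + i)}) ` {1..s}"
  unfolding T_edges_eq by (auto simp: image_Un image_image)

lemma graph_iso_T:
  assumes fin: "finite C" "finite W" and q: "inj_on q C"
    and disj: "v \<notin> q ` C \<union> C \<union> W" "q ` C \<inter> C = {}" "q ` C \<inter> W = {}" "C \<inter> W = {}"
  defines "n \<equiv> 2 * card C + 1 + card W"
  shows "graph_iso (insert v (q ` C \<union> C \<union> W)) ((\<lambda>u. {v, u}) ` (q ` C \<union> W) \<union> (\<lambda>x. {q x, x}) ` C)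
           (T_verts n) (T_edges n (card C))"
proof -
  define s where "s = card C"
  obtain hC where hC: "bij_betw hC {s + 1..2 * s} C"
    using finite_same_card_bij[of "{s + 1..2 * s}" C] fin(1) s_def by auto
  obtain hW where hW: "bij_betw hW {2 * s + 1..<n} W"
    using finite_same_card_bij[of "{2 * s + 1..<n}" W] fin(2) s_def n_def by auto
  \<comment> \<open>label the centre by 0, the ends of the paths by \<open>s + 1..2 * s\<close> (via \<open>hC\<close>), their middle
      vertices \<open>q (hC (s + i))\<close> by \<open>1..s\<close>, and the pendant leaves by \<open>2 * s + 1..<n\<close>\<close>
  define g where "g i = (if i = 0 then v else if i \<le> s then q (hC (s + i))
                         else if i \<le> 2 * s then hC i else hW i)" for i
  have g_lower: "g i = q (hC (s + i))" and g_upper: "g (s + i) = hC (s + i)" if "i \<in> {1..s}" for i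
    using that unfolding g_def by auto
  have "g ` {1..s} = (\<lambda>i. q (hC (s + i))) ` {1..s}"
    using g_lower by (rule image_cong[OF refl])
  also have "\<dots> = q ` hC ` ((+) s ` {1..s})" by (simp only: image_image)
  also have "(+) s ` {1..s} = {s + 1..2 * s}" by (simp add: image_add_atLeastAtMost)
  finally have img_lower: "g ` {1..s} = q ` C" using hC unfolding bij_betw_def by simp
  have "g ` {s + 1..2 * s} = hC ` {s + 1..2 * s}" by (rule image_cong) (auto simp: g_def)
  hence img_C: "g ` {s + 1..2 * s} = C" using hC unfolding bij_betw_def by simp
  have "g ` {2 * s + 1..<n} = hW ` {2 * s + 1..<n}" by (rule image_cong) (auto simp: g_def)
  hence img_W: "g ` {2 * s + 1..<n} = W" using hW unfolding bij_betw_def by simp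
  have "{..<n} = insert 0 ({1..s} \<union> {s + 1..2 * s} \<union> {2 * s + 1..<n})"
    unfolding n_def s_def by auto
  hence img: "g ` {..<n} = insert v (q ` C \<union> C \<union> W)"
    using img_lower img_C img_W by (simp add: image_Un g_def[of 0])
  have "card (insert v (q ` C \<union> C \<union> W)) = n"
    using fin disj card_image[OF q] unfolding n_def s_def by (simp add: card_Un_disjoint Int_Un_distrib2)
  hence "bij_betw g (T_verts n) (insert v (q ` C \<union> C \<union> W))"
    unfolding T_verts_def bij_betw_def using img by (simp add: eq_card_imp_inj_on)
  moreover have "e \<subseteq> T_verts n" if "e \<in> T_edges n s" for e
    using sgraph_edge_subset[OF sgraph_T that] n_def s_def by simp
  moreover have "(\<lambda>u. {v, u}) ` (q ` C \<union> W) \<union> (\<lambda>x. {q x, x}) ` C = (\<lambda>e. g ` e) ` T_edges n s"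
  proof -
    have "(\<lambda>e. g ` e) ` T_edges n s =
        (\<lambda>u. {v, u}) ` (g ` {1..s} \<union> g ` {2 * s + 1..<n}) \<union> (\<lambda>i. {g i, g (s + i)}) ` {1..s}"
      unfolding image_T_edges g_def[of 0] by simp
    also have "(\<lambda>i. {g i, g (s + i)}) ` {1..s} = (\<lambda>i. {q (hC (s + i)), hC (s + i)}) ` {1..s}"
      using g_lower g_upper by (intro image_cong) simp_all
    also have "\<dots> = (\<lambda>x. {q x, x}) ` (hC ` ((+) s ` {1..s}))" by (simp only: image_image)
    also have "hC ` ((+) s ` {1..s}) = C"
      using hC unfolding bij_betw_def by (simp add: image_add_atLeastAtMost mult_2)
    finally show ?thesis using img_lower img_W by simp
  qed
  ultimately show ?thesis
    unfolding s_def by (rule graph_iso_of_bij_betw)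
qed

lemma mult_diff_le_mult_diff:
  fixes a m n :: nat
  assumes "a \<le> m" "2 * m < n"
  shows "a * (n - a) \<le> m * (n - m)"
    and "a * (n - a) = m * (n - m) \<Longrightarrow> a = m"
proof -
  obtain d where d: "m = a + d" using assms(1) le_Suc_ex by blast
  obtain e where e: "n = Suc (2 * m + e)" using less_imp_Suc_add[OF assms(2)] by blast
  have "m * (n - m) = a * (n - a) + d * (d + e + 1)"
    unfolding e d by (simp add: algebra_simps)
  thus "a * (n - a) \<le> m * (n - m)" and "a * (n - a) = m * (n - m) \<Longrightarrow> a = m"
    using d by simp_all
qed

lemma low_degree_bound_arith:
  fixes k n q e :: nat
  assumes "k \<ge> 3" "n \<ge> 11 * k - 4" "q \<le> 3 * (k - 1)" "2 * e + q \<le> n + 2 * q * (3 * k - 2)"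
  shows "e < (k - 1) * (n - k + 1)"
proof -
  obtain j where j: "k = j + 3" using assms(1) le_Suc_ex by (metis add.commute)
  obtain t where t: "n = 11 * j + 29 + t" using assms(2) le_Suc_ex unfolding j by fastforce
  have "q * (6 * j + 13) \<le> (3 * j + 6) * (6 * j + 13)"
    using assms(3) unfolding j by (intro mult_right_mono) simp_all
  thus ?thesis using assms(4) unfolding j t by (simp add: algebra_simps)
qed

lemma card_edges_small_side:
  assumes s: "sgraph V E" and AB: "bipartition V E A B" and n: "card V = n"
    and A: "card A \<le> m" and m: "2 * m < n"
  shows "card E \<le> m * (n - m)"
    and "card E = m * (n - m) \<Longrightarrow> graph_iso V E (K_verts m (n - m)) (K_edges m (n - m))"
proof -
  have V: "A \<union> B = V" "A \<inter> B = {}" using AB unfolding bipartition_def by blast+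
  have fin: "finite A" "finite B" using V(1) sgraph_finite[OF s] by auto
  have B: "card B = n - card A" using card_Un_disjoint[OF fin V(2)] V(1) n by simp
  define K where "K = (\<lambda>(u, v). {u, v}) ` (A \<times> B)"
  have EK: "E \<subseteq> K"
  proof
    fix e assume "e \<in> E"
    then obtain u v where "e = {u, v}" "u \<in> A" "v \<in> B" using AB unfolding bipartition_def by blast
    thus "e \<in> K" unfolding K_def by (intro image_eqI[of _ _ "(u, v)"]) simp_all
  qed
  have fK: "finite K" unfolding K_def using fin by simp
  have cK: "card K = card A * (n - card A)"
    unfolding K_def card_complete_bipartite_edges[OF V(2)] B ..
  have le: "card K \<le> m * (n - m)" unfolding cK by (rule mult_diff_le_mult_diff(1)[OF A m])
  show "card E \<le> m * (n - m)" using card_mono[OF fK EK] le by simp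
  assume eq: "card E = m * (n - m)"
  hence "E = K" using card_seteq[OF fK EK] le by simp
  moreover have "card A = m"
    using mult_diff_le_mult_diff(2)[OF A m] card_mono[OF fK EK] eq le cK by simp
  ultimately show "graph_iso V E (K_verts m (n - m)) (K_edges m (n - m))"
    using graph_iso_complete_bipartite[OF fin V(2)] B V(1) unfolding K_def by simp
qed

lemma card_edges_lt_if_low_degree:
  assumes s: "sgraph V E" and free: "\<not> contains_kP3 k V E" and k: "k \<ge> 3"
    and n: "card V = n" "n \<ge> 11 * k - 4"
    and deg: "\<And>v. v \<in> V \<Longrightarrow> card (neighbours E v) \<le> 3 * k - 2"
  shows "card E < (k - 1) * (n - k + 1)"
proof -
  obtain p where p: "p < k" "contains_kP3 p V E" "\<not> contains_kP3 (Suc p) V E"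
    using ex_least_nat_less[of "\<lambda>p. \<not> contains_kP3 p V E" k] free contains_kP3_0 by auto
  obtain P where P: "P \<subseteq> V" "finite P" "card P \<le> 3 * p" "contains_kP3 p P E"
    by (rule contains_kP3_on_small_set[OF p(2)])
  define R where "R = induced_edges E (V - P)"
  have "2 * card R \<le> card (V - P)"
    unfolding R_def
    by (rule card_edges_P3_free[OF sgraph_induced[OF s] P3_free_outside_packing[OF P(4,1) p(3)]]) blast
  moreover have "card (V - P) = n - card P" "card P \<le> n"
    using P(1,2) n(1) card_mono[OF sgraph_finite[OF s] P(1)] by (simp_all add: card_Diff_subset)
  moreover have "card E \<le> card R + (\<Sum>u\<in>P. card (neighbours E u))"
    unfolding R_def by (rule card_edges_le_induced_plus_degrees[OF s P(1)])
  moreover have "(\<Sum>u\<in>P. card (neighbours E u)) \<le> card P * (3 * k - 2)"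
    using sum_bounded_above[of P "\<lambda>u. card (neighbours E u)" "3 * k - 2"] deg P(1) by auto
  ultimately have "2 * card E + card P \<le> n + 2 * card P * (3 * k - 2)" by linarith
  moreover have "card P \<le> 3 * (k - 1)" using P(3) p(1) by linarith
  ultimately show ?thesis using low_degree_bound_arith[OF k n(2)] by blast
qed

lemma card_edges_lt_if_sides_large:
  fixes V :: "'a set"
  assumes IH: "\<And>(U :: 'a set) F. sgraph U F \<Longrightarrow> bipartite U F \<Longrightarrow> 11 * (k - 1) - 4 \<le> card U \<Longrightarrow>
      \<not> contains_kP3 (k - 1) U F \<Longrightarrow> card F \<le> (k - 1 - 1) * (card U - (k - 1) + 1)"
    and s: "sgraph V E" and b: "bipartite V E" and AB: "bipartition V E A B"
    and k: "k \<ge> 3" and n: "card V = n" "n \<ge> 11 * k - 4" and free: "\<not> contains_kP3 k V E"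
    and A: "card A \<ge> k" and B: "card B \<ge> k"
  shows "card E < (k - 1) * (n - k + 1)"
proof (cases "\<exists>v\<in>V. card (neighbours E v) \<ge> 3 * k - 1")
  case True
  then obtain v where v: "v \<in> V" "card (neighbours E v) \<ge> 3 * k - 1" by blast
  have V: "A \<union> B = V" "A \<inter> B = {}" using AB unfolding bipartition_def by blast+
  have fin: "finite A" "finite B" using V(1) sgraph_finite[OF s] by auto
  have "card A + card B = n" using card_Un_disjoint[OF fin V(2)] V(1) n(1) by simp
  moreover have "neighbours E v \<subseteq> B \<or> neighbours E v \<subseteq> A"
    using v(1) V(1) bipartition_neighbours[OF AB] bipartition_neighbours[OF bipartition_swap[OF AB]]
    by blast
  hence "card (neighbours E v) \<le> card B \<or> card (neighbours E v) \<le> card A"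
    using card_mono[OF fin(1)] card_mono[OF fin(2)] by blast
  ultimately have "card (neighbours E v) \<le> n - k" using A B by linarith
  moreover have "card (V - {v}) = n - 1" using v(1) n(1) sgraph_finite[OF s] by simp
  hence "card (induced_edges E (V - {v})) \<le> (k - 2) * (n - k + 1)"
  proof (intro IH[THEN order_trans])
    show "sgraph (V - {v}) (induced_edges E (V - {v}))" by (rule sgraph_induced[OF s]) blast
    show "bipartite (V - {v}) (induced_edges E (V - {v}))" by (rule bipartite_induced[OF b]) blast
    show "\<not> contains_kP3 (k - 1) (V - {v}) (induced_edges E (V - {v}))"
      by (rule kP3_free_remove_high_degree[OF s free _ v]) (use k in simp)
  qed (use k n(2) in \<open>simp_all add: numeral_2_eq_2\<close>)
  moreover have "k - 1 = Suc (k - 2)" using k by simp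
  hence "(k - 1) * (n - k + 1) = (k - 2) * (n - k + 1) + (n - k + 1)"
    by (simp only: mult_Suc add.commute)
  ultimately show ?thesis using card_edges_split_vertex[OF s v(1)] by linarith
next
  case False
  thus ?thesis by (intro card_edges_lt_if_low_degree[OF s free k n]) auto
qed

lemma kP3_free_extremal_step:
  fixes V :: "'a set"
  assumes IH: "\<And>(U :: 'a set) F. sgraph U F \<Longrightarrow> bipartite U F \<Longrightarrow> 11 * (k - 1) - 4 \<le> card U \<Longrightarrow>
      \<not> contains_kP3 (k - 1) U F \<Longrightarrow> card F \<le> (k - 1 - 1) * (card U - (k - 1) + 1)"
    and s: "sgraph V E" and b: "bipartite V E"
    and k: "k \<ge> 3" and n: "card V = n" "n \<ge> 11 * k - 4" and free: "\<not> contains_kP3 k V E"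
  shows "card E \<le> (k - 1) * (n - k + 1) \<and> (card E = (k - 1) * (n - k + 1) \<longrightarrow>
           graph_iso V E (K_verts (k - 1) (n - k + 1)) (K_edges (k - 1) (n - k + 1)))"
proof -
  obtain A B where AB: "bipartition V E A B" using b bipartite_iff_bipartition by blast
  have nk: "n - (k - 1) = n - k + 1" "2 * (k - 1) < n" using k n(2) by linarith+
  have small: ?thesis if "bipartition V E A' B'" "card A' \<le> k - 1" for A' B'
    using card_edges_small_side[OF s that(1) n(1) that(2) nk(2)] unfolding nk(1) by blast
  consider "card A \<le> k - 1" | "card B \<le> k - 1" | "card A \<ge> k" "card B \<ge> k" by linarith
  thus ?thesis
  proof cases
    case 1 thus ?thesis by (rule small[OF AB])
  next
    case 2 thus ?thesis by (rule small[OF bipartition_swap[OF AB]])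
  next
    case 3
    have "card E < (k - 1) * (n - k + 1)"
      by (rule card_edges_lt_if_sides_large[OF _ s b AB k n free 3]) (fact IH)
    thus ?thesis using less_not_refl3 less_imp_le_nat by blast
  qed
qed

lemma graph_iso_T_star_matching:
  assumes s: "sgraph V E" and v: "v \<in> V" and q: "inj_on q C" "q ` C \<subseteq> neighbours E v"
    and C: "C = V - {v} - neighbours E v" and F: "induced_edges E (V - {v}) = (\<lambda>x. {q x, x}) ` C"
  shows "\<exists>t \<le> (card V - 1) div 2. graph_iso V E (T_verts (card V)) (T_edges (card V) t)"
proof -
  define N W where "N = neighbours E v" and "W = neighbours E v - q ` C"
  have fin: "finite C" "finite W" "finite N"
    using sgraph_finite[OF s] finite_neighbours[OF s] unfolding C N_def W_def by auto
  have vN: "v \<notin> N" unfolding N_def by (rule not_in_neighbours[OF s])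
  have NW: "q ` C \<union> W = N" using q(2) unfolding N_def W_def by blast
  have V: "insert v (q ` C \<union> C \<union> W) = V"
    using NW v neighbours_subset[OF s] unfolding C N_def by blast
  have "card N = card C + card W"
    unfolding NW[symmetric] card_image[OF q(1), symmetric]
    by (rule card_Un_disjoint) (use fin in \<open>auto simp: W_def\<close>)
  moreover have "card V = Suc (card N + card C)"
  proof -
    have "V = insert v (N \<union> C)" using v neighbours_subset[OF s] unfolding C N_def by blast
    moreover have "N \<inter> C = {}" "v \<notin> N \<union> C" using vN unfolding C N_def by blast+
    ultimately show ?thesis using fin(1,3) by (simp add: card_Un_disjoint)
  qed
  ultimately have n: "2 * card C + 1 + card W = card V" by simp
  have "graph_iso (insert v (q ` C \<union> C \<union> W)) ((\<lambda>u. {v, u}) ` (q ` C \<union> W) \<union> (\<lambda>x. {q x, x}) ` C)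
         (T_verts (2 * card C + 1 + card W)) (T_edges (2 * card C + 1 + card W) (card C))"
    by (rule graph_iso_T[OF fin(1,2) q(1)]) (use q(2) vN C NW in \<open>auto simp: N_def W_def\<close>)
  moreover have "(\<lambda>u. {v, u}) ` (q ` C \<union> W) \<union> (\<lambda>x. {q x, x}) ` C = E"
    using edges_split_vertex[OF s v] NW F unfolding N_def by simp
  moreover have "card C \<le> (card V - 1) div 2" using n by linarith
  ultimately show ?thesis unfolding V n by blast
qed

lemma extremal_2P3_free_high_degree:
  assumes s: "sgraph V E" and b: "bipartite V E" and n: "card V = n"
    and free: "\<not> contains_kP3 2 V E" and v: "v \<in> V" and deg: "card (neighbours E v) \<ge> 5"
  shows "card E \<le> n - 1 \<and>
    (card E = n - 1 \<longrightarrow> (\<exists>t \<le> (n - 1) div 2. graph_iso V E (T_verts n) (T_edges n t)))"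
proof -
  define N U C F where "N = neighbours E v" and "U = V - {v}" and "C = V - {v} - neighbours E v"
    and "F = induced_edges E (V - {v})"
  have sF: "sgraph U F" unfolding U_def F_def by (rule sgraph_induced[OF s]) blast
  have freeF: "\<not> contains_kP3 1 U F"
    using kP3_free_remove_high_degree[OF s free _ v] deg unfolding U_def F_def by simp
  have NU: "N \<subseteq> U" unfolding N_def U_def using neighbours_subset[OF s] not_in_neighbours[OF s] by blast
  have UC: "C \<subseteq> U" "U - C = N" using NU unfolding C_def U_def N_def by auto
  have meet: "e \<inter> C \<noteq> {}" if e: "e \<in> F" for e
  proof
    assume "e \<inter> C = {}"
    obtain x y where xy: "e = {x, y}" "x \<in> U" "y \<in> U" by (rule sgraph_edgeE[OF sF e])
    with \<open>e \<inter> C = {}\<close> have "{v, x} \<in> E" "{v, y} \<in> E"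
      unfolding C_def U_def neighbours_def by auto
    moreover have "{x, y} \<in> E" using e xy(1) unfolding F_def induced_edges_def by simp
    ultimately show False using bipartite_no_triangle[OF b] by blast
  qed
  have split: "card E = card N + card F" unfolding N_def F_def by (rule card_edges_split_vertex[OF s v])
  have fU: "finite U" using sF by (rule sgraph_finite)
  have "card U = n - 1" unfolding U_def using v n by simp
  moreover have "C = U - N" unfolding C_def U_def N_def by simp
  ultimately have NC: "card N + card C = n - 1"
    using card_Diff_subset[OF finite_subset[OF NU fU] NU] card_mono[OF fU NU] by simp
  show ?thesis
  proof (intro conjI impI)
    show "card E \<le> n - 1"
      using card_P3_free_edges_le_cover[OF sF freeF UC(1) meet] split NC by linarith
    assume "card E = n - 1"
    hence "card F = card C" using split NC by linarith
    then obtain q where "inj_on q C" "q ` C \<subseteq> N" "F = (\<lambda>x. {q x, x}) ` C"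
      using P3_free_edges_eq_cover[OF sF freeF UC(1) meet] UC(2) by auto
    note q = this[unfolded N_def F_def]
    from graph_iso_T_star_matching[OF s v q(1,2) C_def q(3)]
    show "\<exists>t \<le> (n - 1) div 2. graph_iso V E (T_verts n) (T_edges n t)" unfolding n .
  qed
qed

lemma card_edges_around_P3:
  assumes s: "sgraph V E" and "{a, b} \<in> E" "{b, c} \<in> E"
  shows "card E + 2 \<le> card (induced_edges E (V - {a, b, c}))
           + card (neighbours E a) + card (neighbours E b) + card (neighbours E c)"
proof -
  define R where "R = induced_edges E (V - {a, b, c})"
  define Sa Sb Sc where "Sa = (\<lambda>u. {a, u}) ` (neighbours E a - {b})"
    and "Sb = (\<lambda>u. {b, u}) ` neighbours E b" and "Sc = (\<lambda>u. {c, u}) ` (neighbours E c - {b})"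
  have "E \<subseteq> R \<union> Sb \<union> Sa \<union> Sc"
  proof
    fix e assume e: "e \<in> E"
    show "e \<in> R \<union> Sb \<union> Sa \<union> Sc"
    proof (cases "e \<subseteq> V - {a, b, c}")
      case True thus ?thesis using e unfolding R_def induced_edges_def by blast
    next
      case False
      have star: "e \<in> (\<lambda>u. {x, u}) ` (neighbours E x - {b})" if "x \<in> e" "b \<notin> e" for x
        using incident_edges_eq[OF s, of x] e that by auto
      have "b \<in> e \<or> (a \<in> e \<and> b \<notin> e) \<or> (c \<in> e \<and> b \<notin> e)"
        using False sgraph_edge_subset[OF s e] by blast
      moreover have "e \<in> Sb" if "b \<in> e" using incident_edges_eq[OF s, of b] e that
        unfolding Sb_def by blast
      moreover have "e \<in> Sa" if "a \<in> e" "b \<notin> e" using star[OF that] unfolding Sa_def .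
      moreover have "e \<in> Sc" if "c \<in> e" "b \<notin> e" using star[OF that] unfolding Sc_def .
      ultimately show ?thesis by blast
    qed
  qed
  moreover have "finite R" "finite Sa" "finite Sb" "finite Sc"
    unfolding R_def induced_edges_def Sa_def Sb_def Sc_def
    using sgraph_finite_edges[OF s] finite_neighbours[OF s] by simp_all
  ultimately have "card E \<le> card (R \<union> Sb \<union> Sa \<union> Sc)" by (intro card_mono) simp_all
  hence bound: "card E \<le> card R + card Sb + card Sa + card Sc"
    using card_Un_le[of "R \<union> Sb \<union> Sa" Sc] card_Un_le[of "R \<union> Sb" Sa] card_Un_le[of R Sb]
    by linarith
  have "b \<in> neighbours E a" "b \<in> neighbours E c"
    using assms(2,3) unfolding neighbours_def by (simp_all add: insert_commute)
  moreover from this have "0 < card (neighbours E a)" "0 < card (neighbours E c)"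
    using finite_neighbours[OF s] by (auto simp: card_gt_0_iff)
  ultimately have "card Sa + 1 = card (neighbours E a)" "card Sc + 1 = card (neighbours E c)"
    unfolding Sa_def Sc_def card_star_edges using finite_neighbours[OF s] by (simp_all add: card_Diff_singleton)
  with bound show ?thesis unfolding R_def Sb_def card_star_edges by linarith
qed

lemma common_neighbour_isolated_outside:
  assumes s: "sgraph V E" and b: "bipartite V E" and free: "\<not> contains_kP3 2 V E"
    and ab: "{a, b} \<in> E" and "{b, y} \<in> E" and y: "y \<in> V - Q" and Q: "a \<in> Q" "b \<in> Q"
    and deg: "card (neighbours E a) \<ge> 4"
  shows "y \<notin> \<Union>(induced_edges E (V - Q))"
proof
  assume "y \<in> \<Union>(induced_edges E (V - Q))"
  then obtain e where e: "e \<in> E" "e \<subseteq> V - Q" "y \<in> e" unfolding induced_edges_def by blast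
  then obtain z where z: "e = {y, z}" "z \<noteq> y" using sgraph_edgeE[OF s e(1)]
    by (metis doubleton_eq_iff insertE singletonD)
  have zQ: "z \<in> V - Q" using e(2) z(1) by simp
  have "y \<notin> neighbours E a"
    using bipartite_no_triangle[OF b ab \<open>{b, y} \<in> E\<close>] unfolding neighbours_def by blast
  have "card (neighbours E a) - card {b, z} \<le> card (neighbours E a - {b, z})"
    by (rule diff_card_le_card_Diff) simp
  moreover have "card {b, z} \<le> 2" by (simp add: card_insert_le_m1)
  ultimately have "2 \<le> card (neighbours E a - {b, z})" using deg by linarith
  then obtain w1 w2 where w: "w1 \<in> neighbours E a - {b, z}" "w2 \<in> neighbours E a - {b, z}" "w1 \<noteq> w2"
    by (auto simp: numeral_2_eq_2 card_le_Suc_iff)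
  have "contains_kP3 1 {z, y, b} E"
    unfolding contains_kP3_1_iff using z e(1) zQ y Q \<open>{b, y} \<in> E\<close>
    by (intro exI[of _ z] exI[of _ y] exI[of _ b]) (auto simp: insert_commute)
  moreover have "{z, y, b} \<subseteq> V" using y zQ ab sgraph_edge_vertices[OF s] by blast
  ultimately have "contains_kP3 (Suc 1) V E"
  proof (rule contains_kP3_Suc[where x = w1 and y = a and z = w2])
    show "{w1, a} \<in> E" "{a, w2} \<in> E"
      using w unfolding neighbours_def by (simp_all add: insert_commute)
  qed (use w y zQ Q \<open>y \<notin> neighbours E a\<close> neighbours_subset[OF s] not_in_neighbours[OF s, of a]
         sgraph_edge_vertices[OF s ab] sgraph_no_loop[OF s ab] in auto)
  with free show False by (simp add: numeral_2_eq_2)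
qed

lemma card_Union_outside_P3:
  assumes s: "sgraph V E" and b: "bipartite V E" and free: "\<not> contains_kP3 2 V E"
    and xyz: "{x, y} \<in> E" "{y, z} \<in> E" "x \<noteq> z"
    and deg: "card (neighbours E x) \<ge> 4" "card (neighbours E y) \<ge> 4"
  shows "card (\<Union>(induced_edges E (V - {x, y, z}))) + 5 \<le> card V"
proof -
  define Q R where "Q = {x, y, z}" and "R = induced_edges E (V - Q)"
  have "x \<in> neighbours E y" "z \<in> neighbours E y"
    using xyz unfolding neighbours_def by (simp_all add: insert_commute)
  have "card (neighbours E y) - card {x, z} \<le> card (neighbours E y - {x, z})"
    by (rule diff_card_le_card_Diff) simp
  hence "2 \<le> card (neighbours E y - {x, z})" using deg(2) xyz(3) by simp
  then obtain y1 y2 where y12: "y1 \<in> neighbours E y - {x, z}" "y2 \<in> neighbours E y - {x, z}" "y1 \<noteq> y2"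
    by (auto simp: numeral_2_eq_2 card_le_Suc_iff)
  have out: "{y, w} \<in> E" "w \<in> V - Q" if "w \<in> {y1, y2}" for w
    using that y12 neighbours_subset[OF s] not_in_neighbours[OF s, of y] unfolding neighbours_def Q_def
    by auto
  have "w \<notin> \<Union>R" if "w \<in> {y1, y2}" for w
    unfolding R_def
    by (rule common_neighbour_isolated_outside[OF s b free xyz(1) out[OF that]])
      (use deg(1) Q_def in auto)
  hence "\<Union>R \<subseteq> V - Q - {y1, y2}"
    using sgraph_edge_subset[OF sgraph_induced[OF s Diff_subset]] unfolding R_def by blast
  hence "card (\<Union>R) \<le> card (V - Q - {y1, y2})"
    using sgraph_finite[OF s] by (intro card_mono) auto
  moreover have "card (V - Q - {y1, y2}) + 5 = card V"
  proof -
    have Q: "Q \<subseteq> V" "finite Q" "card Q = 3"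
      using xyz sgraph_edge_vertices[OF s] sgraph_no_loop[OF s] unfolding Q_def by auto
    have y: "{y1, y2} \<subseteq> V - Q" "card {y1, y2} = 2" using out(2) y12(3) by auto
    have fin: "finite (V - Q)" using sgraph_finite[OF s] by simp
    show ?thesis
      using card_Diff_subset[OF Q(2,1)] card_Diff_subset[OF _ y(1)] card_mono[OF fin y(1)]
        card_mono[OF sgraph_finite[OF s] Q(1)] Q(3) y(2) by simp
  qed
  ultimately show ?thesis unfolding R_def Q_def by linarith
qed

lemma card_edges_lt_if_2P3_free_low_degree:
  assumes s: "sgraph V E" and b: "bipartite V E" and n: "card V = n" "n \<ge> 18"
    and free: "\<not> contains_kP3 2 V E" and deg: "\<And>v. v \<in> V \<Longrightarrow> card (neighbours E v) \<le> 4"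
  shows "card E < n - 1"
proof (cases "contains_kP3 1 V E")
  case False
  thus ?thesis using card_edges_P3_free[OF s False] n by linarith
next
  case True
  then obtain x y z where xyz: "x \<in> V" "y \<in> V" "z \<in> V" "distinct [x, y, z]" "{x, y} \<in> E" "{y, z} \<in> E"
    unfolding contains_kP3_1_iff by blast
  define Q R where "Q = {x, y, z}" and "R = induced_edges E (V - Q)"
  have Q: "Q \<subseteq> V" "finite Q" "card Q = 3" using xyz unfolding Q_def by auto
  have "contains_kP3 1 Q E" unfolding contains_kP3_1_iff Q_def using xyz by blast
  hence freeR: "\<not> contains_kP3 1 (V - Q) R"
    unfolding R_def using P3_free_outside_packing[OF _ Q(1)] free by (simp add: numeral_2_eq_2)
  have sR: "sgraph (V - Q) R" unfolding R_def by (rule sgraph_induced[OF s]) blast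
  have around: "card E + 2 \<le> card R + card (neighbours E x) + card (neighbours E y) + card (neighbours E z)"
    unfolding R_def Q_def by (rule card_edges_around_P3[OF s xyz(5,6)])
  show ?thesis
  proof (cases "card (neighbours E x) + card (neighbours E y) + card (neighbours E z) \<le> 11")
    case True
    have "card (V - Q) = n - 3" using Q n(1) sgraph_finite[OF s] by (simp add: card_Diff_subset)
    thus ?thesis using True around card_edges_P3_free[OF sR freeR] n(2) by linarith
  next
    case False
    hence deg4: "card (neighbours E x) = 4" "card (neighbours E y) = 4"
      using deg[OF xyz(1)] deg[OF xyz(2)] deg[OF xyz(3)] by linarith+
    hence "card (\<Union>R) + 5 \<le> n"
      unfolding R_def Q_def n(1)[symmetric] using xyz(4)
      by (intro card_Union_outside_P3[OF s b free xyz(5,6)]) simp_all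
    thus ?thesis using card_Union_P3_free[OF sR freeR] around deg4 deg[OF xyz(3)] n(2) by linarith
  qed
qed

lemma extremal_2P3_free:
  assumes s: "sgraph V E" and b: "bipartite V E" and n: "card V = n" "n \<ge> 18"
    and free: "\<not> contains_kP3 2 V E"
  shows "card E \<le> n - 1 \<and>
    (card E = n - 1 \<longrightarrow> (\<exists>t \<le> (n - 1) div 2. graph_iso V E (T_verts n) (T_edges n t)))"
proof (cases "\<exists>v\<in>V. card (neighbours E v) \<ge> 5")
  case True
  then obtain v where "v \<in> V" "card (neighbours E v) \<ge> 5" by blast
  thus ?thesis by (rule extremal_2P3_free_high_degree[OF s b n(1) free])
next
  case False
  hence "card E < n - 1" by (intro card_edges_lt_if_2P3_free_low_degree[OF s b n free]) auto
  thus ?thesis by simp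
qed

theorem card_edges_le_if_kP3_free:
  fixes V :: "'a set"
  assumes "k \<ge> 2" "sgraph V E" "bipartite V E" "card V = n" "n \<ge> 11 * k - 4"
    and "\<not> contains_kP3 k V E"
  shows "card E \<le> (k - 1) * (n - k + 1)"
  using assms
proof (induction k arbitrary: V E n rule: nat_induct_at_least)
  case base
  hence "card E \<le> n - 1" "(2 - 1) * (n - 2 + 1) = n - 1"
    using extremal_2P3_free[of V E n] by simp_all
  thus ?case by simp
next
  case (Suc k)
  have "card E \<le> (Suc k - 1) * (n - Suc k + 1) \<and> (card E = (Suc k - 1) * (n - Suc k + 1) \<longrightarrow>
      graph_iso V E (K_verts (Suc k - 1) (n - Suc k + 1)) (K_edges (Suc k - 1) (n - Suc k + 1)))"
    by (rule kP3_free_extremal_step[OF _ Suc.prems(1,2) _ Suc.prems(3-5)])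
      (use Suc.IH Suc.hyps in simp_all)
  thus ?case by blast
qed

lemma kP3_free_extremal_graph_iso:
  fixes V :: "'a set"
  assumes "k \<ge> 3" "sgraph V E" "bipartite V E" "card V = n" "n \<ge> 11 * k - 4"
    and "\<not> contains_kP3 k V E" "card E = (k - 1) * (n - k + 1)"
  shows "graph_iso V E (K_verts (k - 1) (n - k + 1)) (K_edges (k - 1) (n - k + 1))"
proof -
  have "card F \<le> (k - 1 - 1) * (card U - (k - 1) + 1)"
    if "sgraph U F" "bipartite U F" "11 * (k - 1) - 4 \<le> card U" "\<not> contains_kP3 (k - 1) U F"
    for U :: "'a set" and F
    using card_edges_le_if_kP3_free[OF _ that(1,2) refl that(3,4)] assms(1) by simp
  thus ?thesis using kP3_free_extremal_step[OF _ assms(2,3,1,4-6)] assms(7) by blast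
qed

theorem mainTheorem2:
  fixes V :: "'a set" and E :: "'a set set" and k n :: nat
  assumes "sgraph V E" and "bipartite V E"
    and "k \<ge> 2" and "card V = n" and "n \<ge> 11 * k - 4"
    and "\<not> contains_kP3 k V E"
  shows "card E \<le> (k - 1) * (n - k + 1)
    \<and> (k = 2 \<longrightarrow> (card E = (k - 1) * (n - k + 1) \<longleftrightarrow>
          (\<exists>s \<le> (n - 1) div 2. graph_iso V E (T_verts n) (T_edges n s))))
    \<and> (k \<ge> 3 \<longrightarrow> (card E = (k - 1) * (n - k + 1) \<longleftrightarrow>
          graph_iso V E (K_verts (k - 1) (n - k + 1)) (K_edges (k - 1) (n - k + 1))))"
proof (intro conjI impI)
  show "card E \<le> (k - 1) * (n - k + 1)" by (rule card_edges_le_if_kP3_free[OF assms(3,1,2,4-6)])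
next
  assume "k = 2"
  hence n: "n \<ge> 18" "(k - 1) * (n - k + 1) = n - 1" using assms(5) by simp_all
  have "card E = n - 1" if "graph_iso V E (T_verts n) (T_edges n t)" "t \<le> (n - 1) div 2" for t
    using card_edges_graph_iso[OF that(1) assms(1) sgraph_T] card_T_edges that(2) n(1) by simp
  thus "card E = (k - 1) * (n - k + 1) \<longleftrightarrow> (\<exists>s \<le> (n - 1) div 2. graph_iso V E (T_verts n) (T_edges n s))"
    using extremal_2P3_free[OF assms(1,2,4) n(1)] assms(6) \<open>k = 2\<close> n(2) by auto
next
  assume "k \<ge> 3"
  thus "card E = (k - 1) * (n - k + 1) \<longleftrightarrow>
          graph_iso V E (K_verts (k - 1) (n - k + 1)) (K_edges (k - 1) (n - k + 1))"
    using kP3_free_extremal_graph_iso[OF \<open>k \<ge> 3\<close> assms(1,2,4-6)] card_edges_graph_iso[OF _ assms(1) sgraph_K]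
      card_K_edges by metis
qed

end
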